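(* Let $\mathcal D=(C_1,C_2,C_3,C_4)$ be an ordered $4$-tuple of oriented circles in $\mathbb R^2$ (oriented lines allowed), and let $\mathbf M_{\mathcal D}$ be the real $4\times 3$ matrix whose $i$-th row is the curvature-center coordinate vector $\mathbf m(C_i)$. If $\mathcal D$ is an ordered, oriented Descartes configuration, then the first column of $\mathbf M=\mathbf M_{\mathcal D}$ is nonzero and $$\mathbf M^T\mathbf Q_D\mathbf M=\begin{pmatrix}0&0&0\\0&2&0\\0&0&2\end{pmatrix}.$$ Conversely, every real $4\times3$ matrix $\mathbf M$ with nonzero first column satisfying this equation equals $\mathbf M_{\mathcal D}$ for a unique ordered, oriented Descartes configuration $\mathcal D$.
   Context: An oriented circle is a circle together with a choice of unit normal pointing inward or outward. If it has radius $r$, its oriented curvature is $b=1/r$ for an inward normal and $b=-1/r$ for an outward normal; its interior is the open disk it bounds for an inward normal and the open exterior of that disk for an outward normal. A line is regarded as a circle of curvature $0$; an oriented line is a line with a chosen unit normal $\mathbf h=(h_1,h_2)$, and its interior is the open half-plane into which $\mathbf h$ points. A Descartes configuration is a set of four mutually tangent circles (lines allowed; two parallel lines count as tangent at $\infty$) with six distinct points of tangency. An oriented Descartes configuration is a Descartes configuration whose circles are oriented so that either the four interiors are pairwise disjoint, or they become pairwise disjoint after reversing all four orientations. Curvature-center coordinates: for an oriented circle with center $(x,y)$ and oriented curvature $b\neq0$, $\mathbf m(C)=(b,bx,by)$; for an oriented line with unit normal $\mathbf h$, $\mathbf m(C)=(0,h_1,h_2)$. The Descartes matrix is $\mathbf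 Q_D=\mathbf I-\tfrac12\mathbf 1\mathbf 1^T$, i.e. the $4\times4$ matrix with diagonal entries $1/2$ and off-diagonal entries $-1/2$. *)

theory Defs
  imports "HOL-Analysis.Analysis"
begin

text \<open>An oriented circle is either a proper circle with centre, radius and an
  orientation flag (True = inward normal), or an oriented line
  {p. h \<bullet> p = d} with unit normal h, whose interior is {p. h \<bullet> p > d}.\<close>

datatype ocircle =
    OCircle "real \<times> real" real bool
  | OLine "real \<times> real" real

fun valid_oc :: "ocircle \<Rightarrow> bool" where
  "valid_oc (OCircle c r inw) = (r > 0)"
| "valid_oc (OLine h d) = ((fst h)\<^sup>2 + (snd h)\<^sup>2 = 1)"

fun is_line :: "ocircle \<Rightarrow> bool" where
  "is_line (OCircle c r inw) = False"
| "is_line (OLine h d) = True"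

fun pts :: "ocircle \<Rightarrow> (real \<times> real) set" where
  "pts (OCircle c r inw) = {p. dist p c = r}"
| "pts (OLine h d) = {p. fst h * fst p + snd h * snd p = d}"

text \<open>Point set in the extended plane R^2 \<union> {\<infinity>}; None stands for \<infinity>,
  which lies on every line.\<close>
definition ext_pts :: "ocircle \<Rightarrow> (real \<times> real) option set" where
  "ext_pts C = Some ` pts C \<union> (if is_line C then {None} else {})"

definition tangent :: "ocircle \<Rightarrow> ocircle \<Rightarrow> bool" where
  "tangent C D \<longleftrightarrow> (\<exists>!q. q \<in> ext_pts C \<inter> ext_pts D)"

definition tangency_point :: "ocircle \<Rightarrow> ocircle \<Rightarrow> (real \<times> real) option" where
  "tangency_point C D = (THE q. q \<in> ext_pts C \<inter> ext_pts D)"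

fun ointerior :: "ocircle \<Rightarrow> (real \<times> real) set" where
  "ointerior (OCircle c r inw) = (if inw then {p. dist p c < r} else {p. dist p c > r})"
| "ointerior (OLine h d) = {p. fst h * fst p + snd h * snd p > d}"

fun reverse_oc :: "ocircle \<Rightarrow> ocircle" where
  "reverse_oc (OCircle c r inw) = OCircle c r (\<not> inw)"
| "reverse_oc (OLine h d) = OLine (- h) (- d)"

fun ocurv :: "ocircle \<Rightarrow> real" where
  "ocurv (OCircle c r inw) = (if inw then 1 / r else - 1 / r)"
| "ocurv (OLine h d) = 0"

fun mvec :: "ocircle \<Rightarrow> real ^ 3" where
  "mvec (OCircle c r inw) =
     (let b = (if inw then 1 / r else - 1 / r) in vector [b, b * fst c, b * snd c])"
| "mvec (OLine h d) = vector [0, fst h, snd h]"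

type_synonym config = "ocircle \<times> ocircle \<times> ocircle \<times> ocircle"

fun clist :: "config \<Rightarrow> ocircle list" where
  "clist (C1, C2, C3, C4) = [C1, C2, C3, C4]"

definition descartes_config :: "config \<Rightarrow> bool" where
  "descartes_config D \<longleftrightarrow>
     (let L = clist D in
       (\<forall>i<4. valid_oc (L ! i)) \<and>
       (\<forall>i<4. \<forall>j<4. i \<noteq> j \<longrightarrow> tangent (L ! i) (L ! j)) \<and>
       inj_on (\<lambda>(i, j). tangency_point (L ! i) (L ! j)) {(i, j). i < j \<and> j < (4::nat)})"

definition oriented_descartes :: "config \<Rightarrow> bool" where
  "oriented_descartes D \<longleftrightarrow>
     descartes_config D \<and>
     (let L = clist D in
       (\<forall>i<4. \<forall>j<4. i \<noteq> j \<longrightarrow> ointerior (L ! i) \<inter> ointerior (L ! j) = {}) \<or>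
       (\<forall>i<4. \<forall>j<4. i \<noteq> j \<longrightarrow>
          ointerior (reverse_oc (L ! i)) \<inter> ointerior (reverse_oc (L ! j)) = {}))"

fun MD :: "config \<Rightarrow> real ^ 3 ^ 4" where
  "MD (C1, C2, C3, C4) = vector [mvec C1, mvec C2, mvec C3, mvec C4]"

definition QD :: "real ^ 4 ^ 4" where
  "QD = (\<chi> i j. if i = j then 1 / 2 else - 1 / 2)"

definition target3 :: "real ^ 3 ^ 3" where
  "target3 = vector [vector [0, 0, 0], vector [0, 2, 0], vector [0, 0, 2]]"

end

theory Submission
  imports Defs
begin

text \<open>Attach to an oriented circle C its augmented coordinates w(C) = (bbar, b, b x, b y) and
  use the Lorentz form <u, v> = u3 v3 + u4 v4 - (u1 v2 + u2 v1) / 2. Then <w(C), w(C)> = 1, the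
  circle and its interior are the zero set and the negative set of a power function attached to
  w(C), and tangent circles with disjoint interiors have <w(C), w(C')> = -1. Conversely
  <w, w'> = -1 forces tangency at the point represented by the null vector w + w'; distinct pairs
  touch at distinct points, and the interiors are disjoint, possibly after reversing all
  orientations, because a pair sum w_i + w_j and the complementary pair sum lie in the same half
  of the light cone. So D is an oriented Descartes configuration iff the matrix W with rows
  w(C_i) has Gram matrix Q_D, which, Q_D being an involution, amounts to W^T Q_D W = Q_W; and M_D
  consists of the last three columns of W. A solution M extends to such a W by adjoining a
  suitable first column, unique because some curvature is nonzero.\<close>

lemma vector_4 [simp]:
  "(vector [x, y, z, w] :: ('a::zero)^4) $ 1 = x"
  "(vector [x, y, z, w] :: ('a::zero)^4) $ 2 = y"
  "(vector [x, y, z, w] :: ('a::zero)^4) $ 3 = z"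
  "(vector [x, y, z, w] :: ('a::zero)^4) $ 4 = w"
  unfolding vector_def by simp_all

lemma all_less_4: "(\<forall>i<4. P i) \<longleftrightarrow> P 0 \<and> P 1 \<and> P 2 \<and> P (3::nat)"
  by (auto simp: less_Suc_eq numeral_eq_Suc)

lemma length_clist [simp]: "length (clist D) = 4"
  by (cases D) simp

lemma clist_inj: "clist D = clist D' \<Longrightarrow> D = D'"
  by (cases D, cases D') simp

lemma valid_of_oriented_descartes:
  assumes "oriented_descartes D"
  shows "\<forall>C\<in>set (clist D). valid_oc C"
  using assms by (auto simp: oriented_descartes_def descartes_config_def Let_def in_set_conv_nth)

section \<open>Augmented curvature-centre coordinates\<close>

text \<open>The paper's w(C) = (bbar, b, b x, b y), where the cocurvature bbar = b |c|^2 - 1/b is the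
  oriented curvature of the image of C under inversion in the unit circle.\<close>

fun aug_coords :: "ocircle \<Rightarrow> real^4" where
  "aug_coords (OCircle c r inw) = (let b = (if inw then 1 / r else - 1 / r) in
     vector [b * ((fst c)\<^sup>2 + (snd c)\<^sup>2) - 1 / b, b, b * fst c, b * snd c])"
| "aug_coords (OLine h d) = vector [2 * d, 0, fst h, snd h]"

definition lorentz :: "real^4 \<Rightarrow> real^4 \<Rightarrow> real" where
  "lorentz u v = u$3 * v$3 + u$4 * v$4 - (u$1 * v$2 + u$2 * v$1) / 2"

lemma lorentz_commute: "lorentz u v = lorentz v u"
  by (simp add: lorentz_def algebra_simps)

lemma lorentz_add_left: "lorentz (u + v) w = lorentz u w + lorentz v w"
  and lorentz_add_right: "lorentz w (u + v) = lorentz w u + lorentz w v"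
  and lorentz_diff_left: "lorentz (u - v) w = lorentz u w - lorentz v w"
  and lorentz_diff_right: "lorentz w (u - v) = lorentz w u - lorentz w v"
  and lorentz_minus_left: "lorentz (- u) w = - lorentz u w"
  and lorentz_minus_right: "lorentz w (- u) = - lorentz w u"
  by (simp_all add: lorentz_def field_simps)

lemma lorentz_sum_right: "lorentz w (\<Sum>i\<in>A. f i) = (\<Sum>i\<in>A. lorentz w (f i))"
  by (induction A rule: infinite_finite_induct) (simp_all add: lorentz_add_right lorentz_def[of w 0])

lemma lorentz_aug_coords_self: "valid_oc C \<Longrightarrow> lorentz (aug_coords C) (aug_coords C) = 1"
  by (cases C) (auto simp: lorentz_def Let_def field_simps power2_eq_square)

lemma aug_coords_reverse: "aug_coords (reverse_oc C) = - aug_coords C"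
  by (cases C) (auto simp: Let_def vec_eq_iff forall_4 field_simps)

lemma valid_reverse: "valid_oc (reverse_oc C) = valid_oc C"
  by (cases C) auto

lemma tangent_reverse: "tangent (reverse_oc C) (reverse_oc D) = tangent C D"
proof -
  have "ext_pts (reverse_oc C) = ext_pts C" for C
    by (cases C) (auto simp: ext_pts_def)
  then show ?thesis by (simp add: tangent_def)
qed

text \<open>For a circle, power_fun (aug_coords C) p = b (|p - c|^2 - r^2) is the power of p with
  respect to C scaled by the oriented curvature b; for a line it is 2 (d - h . p).\<close>

definition power_fun :: "real^4 \<Rightarrow> real \<times> real \<Rightarrow> real" where
  "power_fun w p = w$1 - 2 * (w$3 * fst p + w$4 * snd p) + w$2 * ((fst p)\<^sup>2 + (snd p)\<^sup>2)"

lemma power_fun_add: "power_fun (u + v) p = power_fun u p + power_fun v p"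
  by (simp add: power_fun_def algebra_simps)

lemma power2_dist_prod: "(dist p c)\<^sup>2 = (fst p - fst c)\<^sup>2 + (snd p - snd (c::real\<times>real))\<^sup>2"
  by (simp add: dist_prod_def dist_real_def)

lemma power_fun_aug_coords_circle:
  assumes "r > 0"
  shows "power_fun (aug_coords (OCircle c r inw)) p = (if inw then 1 else -1) * ((dist p c)\<^sup>2 / r - r)"
  unfolding power2_dist_prod using assms by (auto simp: power_fun_def Let_def field_simps power2_eq_square)

lemma pts_eq_power_fun_zero: "valid_oc C \<Longrightarrow> pts C = {p. power_fun (aug_coords C) p = 0}"
proof (cases C)
  case (OCircle c r inw)
  assume "valid_oc C"
  then have r: "r > 0" using OCircle by simp
  have "dist p c = r \<longleftrightarrow> (dist p c)\<^sup>2 = r\<^sup>2" for p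
    using r by (simp add: power2_eq_iff_nonneg)
  moreover have "(dist p c)\<^sup>2 = r\<^sup>2 \<longleftrightarrow> (dist p c)\<^sup>2 / r - r = 0" for p
    using r by (simp add: field_simps power2_eq_square)
  ultimately show ?thesis
    unfolding OCircle power_fun_aug_coords_circle[OF r] by auto
qed (auto simp: power_fun_def)

lemma ointerior_eq_power_fun_neg: "valid_oc C \<Longrightarrow> ointerior C = {p. power_fun (aug_coords C) p < 0}"
proof (cases C)
  case (OCircle c r inw)
  assume "valid_oc C"
  then have r: "r > 0" using OCircle by simp
  have "dist p c < r \<longleftrightarrow> (dist p c)\<^sup>2 / r - r < 0" "r < dist p c \<longleftrightarrow> (dist p c)\<^sup>2 / r - r > 0" for p
    using r abs_le_square_iff[of r "dist p c"] abs_le_square_iff[of "dist p c" r]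
    by (auto simp: field_simps power2_eq_square)
  then show ?thesis
    unfolding OCircle power_fun_aug_coords_circle[OF r] by auto
qed (auto simp: power_fun_def)

lemma Some_in_ext_pts_iff: "valid_oc C \<Longrightarrow> Some q \<in> ext_pts C \<longleftrightarrow> power_fun (aug_coords C) q = 0"
  by (auto simp: ext_pts_def pts_eq_power_fun_zero)

lemma None_in_ext_pts_iff: "valid_oc C \<Longrightarrow> None \<in> ext_pts C \<longleftrightarrow> aug_coords C $ 2 = 0"
  by (cases C) (auto simp: ext_pts_def)

definition drop_cocurv :: "real^4 \<Rightarrow> real^3" where
  "drop_cocurv w = vector [w$2, w$3, w$4]"

lemma mvec_eq_drop_cocurv: "mvec C = drop_cocurv (aug_coords C)"
  by (cases C) (simp_all add: drop_cocurv_def Let_def)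

lemma drop_cocurv_eq_iff: "drop_cocurv x = drop_cocurv y \<longleftrightarrow> x$2 = y$2 \<and> x$3 = y$3 \<and> x$4 = y$4"
  by (simp add: drop_cocurv_def vec_eq_iff forall_3)

definition circle_of :: "real^4 \<Rightarrow> ocircle" where
  "circle_of w = (if w$2 \<noteq> 0 then OCircle (w$3 / w$2, w$4 / w$2) (1 / \<bar>w$2\<bar>) (w$2 > 0)
                  else OLine (w$3, w$4) (w$1 / 2))"

lemma valid_circle_of: "lorentz w w = 1 \<Longrightarrow> valid_oc (circle_of w)"
  by (auto simp: circle_of_def lorentz_def power2_eq_square)

lemma aug_coords_circle_of:
  assumes "lorentz w w = 1"
  shows "aug_coords (circle_of w) = w"
proof (cases "w$2 = 0")
  case False
  have "w$2 * ((w$3 / w$2)\<^sup>2 + (w$4 / w$2)\<^sup>2) - 1 / w$2 = w$1"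
    using False assms by (simp add: lorentz_def field_simps power2_eq_square)
  moreover have "(if 0 < w$2 then 1 / (1 / \<bar>w$2\<bar>) else - 1 / (1 / \<bar>w$2\<bar>)) = w$2"
    by auto
  ultimately show ?thesis
    using False by (simp add: circle_of_def vec_eq_iff forall_4 del: divide_divide_eq_right)
qed (simp add: circle_of_def vec_eq_iff forall_4)

lemma circle_of_aug_coords: "valid_oc C \<Longrightarrow> circle_of (aug_coords C) = C"
  by (cases C) (auto simp: circle_of_def)

lemma ointerior_circle_of:
  "lorentz w w = 1 \<Longrightarrow> ointerior (circle_of w) = {p. power_fun w p < 0}"
  using ointerior_eq_power_fun_neg[OF valid_circle_of] by (simp add: aug_coords_circle_of)

lemma reverse_circle_of:
  assumes "lorentz w w = 1"
  shows "reverse_oc (circle_of w) = circle_of (- w)"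
proof -
  have "reverse_oc (circle_of w) = circle_of (aug_coords (reverse_oc (circle_of w)))"
    using assms by (simp add: circle_of_aug_coords valid_reverse valid_circle_of)
  then show ?thesis
    using assms by (simp add: aug_coords_reverse aug_coords_circle_of)
qed

section \<open>Tangent circles with disjoint interiors\<close>

lemma power_fun_step:
  "power_fun w (fst q - t * a1, snd q - t * a2) =
     power_fun w q - 2 * t * ((w$2 * fst q - w$3) * a1 + (w$2 * snd q - w$4) * a2)
     + w$2 * t\<^sup>2 * (a1\<^sup>2 + a2\<^sup>2)"
  by (simp add: power_fun_def power2_eq_square algebra_simps)

lemma lorentz_eq_gradient_inner:
  assumes "power_fun w q = 0" and "power_fun w' q = 0"
  shows "lorentz w w' = (w$2 * fst q - w$3) * (w'$2 * fst q - w'$3) + (w$2 * snd q - w$4) * (w'$2 * snd q - w'$4)"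
  using assms unfolding power_fun_def lorentz_def by algebra

text \<open>At the common point q the gradients of the two power functions are 2 u and 2 v for unit
  vectors u, v with u . v = lorentz w1 w2. Unless v = - u, a small step from q against u + v makes
  both power functions negative.\<close>

lemma lorentz_eq_neg1_if_touching:
  assumes w1: "lorentz w1 w1 = 1" and w2: "lorentz w2 w2 = 1"
    and q: "power_fun w1 q = 0" "power_fun w2 q = 0"
    and disj: "\<And>p. power_fun w1 p \<ge> 0 \<or> power_fun w2 p \<ge> 0"
  shows "lorentz w1 w2 = -1"
proof (rule ccontr)
  assume neq: "lorentz w1 w2 \<noteq> -1"
  define u1 u2 v1 v2 where "u1 = w1$2 * fst q - w1$3" and "u2 = w1$2 * snd q - w1$4"
    and "v1 = w2$2 * fst q - w2$3" and "v2 = w2$2 * snd q - w2$4"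
  define k where "k = 1 + lorentz w1 w2"
  have uu: "u1 * u1 + u2 * u2 = 1" and vv: "v1 * v1 + v2 * v2 = 1" and uv: "u1 * v1 + u2 * v2 = k - 1"
    using lorentz_eq_gradient_inner[OF q(1) q(1)] lorentz_eq_gradient_inner[OF q(2) q(2)]
      lorentz_eq_gradient_inner[OF q] w1 w2
    by (simp_all add: u1_def u2_def v1_def v2_def k_def)
  have sq: "(u1 + v1)\<^sup>2 + (u2 + v2)\<^sup>2 = 2 * k"
    using uu vv uv by (simp add: power2_eq_square algebra_simps)
  then have "2 * k \<ge> 0"
    by (metis add_nonneg_nonneg zero_le_power2)
  moreover have "k \<noteq> 0"
    using neq by (simp add: k_def)
  ultimately have "k > 0"
    by linarith
  have uk: "u1 * (u1 + v1) + u2 * (u2 + v2) = k" and vk: "v1 * (u1 + v1) + v2 * (u2 + v2) = k"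
    using uu vv uv by (simp_all add: algebra_simps)
  define t where "t = 1 / (\<bar>w1$2\<bar> + \<bar>w2$2\<bar> + 1)"
  have "t > 0" "w1$2 * t < 1" "w2$2 * t < 1"
    unfolding t_def by (auto simp: field_simps abs_if)
  define p where "p = (fst q - t * (u1 + v1), snd q - t * (u2 + v2))"
  have value_at_p: "power_fun w p = 2 * t * k * (w$2 * t - 1)"
    if "power_fun w q = 0" and "(w$2 * fst q - w$3) * (u1 + v1) + (w$2 * snd q - w$4) * (u2 + v2) = k" for w
  proof -
    have "power_fun w p = 0 - 2 * t * k + w$2 * t\<^sup>2 * (2 * k)"
      using power_fun_step[of w q t "u1 + v1" "u2 + v2"] unfolding p_def that sq .
    then show ?thesis
      by (simp add: power2_eq_square algebra_simps)
  qed
  have "power_fun w1 p = 2 * t * k * (w1$2 * t - 1)" "power_fun w2 p = 2 * t * k * (w2$2 * t - 1)"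
    using value_at_p q uk vk by (simp_all add: u1_def u2_def v1_def v2_def)
  moreover have "2 * t * k * (w1$2 * t - 1) < 0" "2 * t * k * (w2$2 * t - 1) < 0"
    using \<open>t > 0\<close> \<open>k > 0\<close> \<open>w1$2 * t < 1\<close> \<open>w2$2 * t < 1\<close> by (simp_all add: mult_pos_neg)
  ultimately show False
    using disj[of p] by simp
qed

text \<open>Tangency at infinity: unless the normals of the two lines are opposite, a long step along
  their sum enters both interiors.\<close>

lemma lorentz_eq_neg1_if_parallel:
  assumes w1: "lorentz w1 w1 = 1" "w1$2 = 0" and w2: "lorentz w2 w2 = 1" "w2$2 = 0"
    and disj: "\<And>p. power_fun w1 p \<ge> 0 \<or> power_fun w2 p \<ge> 0"
  shows "lorentz w1 w2 = -1"
proof (rule ccontr)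
  assume neq: "lorentz w1 w2 \<noteq> -1"
  define k where "k = 1 + lorentz w1 w2"
  have "(w1$3 + w2$3)\<^sup>2 + (w1$4 + w2$4)\<^sup>2 = 2 * k"
    using w1 w2 by (simp add: lorentz_def k_def power2_eq_square algebra_simps)
  moreover have "(w1$3 + w2$3)\<^sup>2 + (w1$4 + w2$4)\<^sup>2 \<ge> 0"
    by simp
  moreover have "k \<noteq> 0"
    using neq by (simp add: k_def)
  ultimately have "k > 0"
    by linarith
  define m where "m = \<bar>w1$1\<bar> + \<bar>w2$1\<bar> + 1"
  define p where "p = (m / k * (w1$3 + w2$3), m / k * (w1$4 + w2$4))"
  have value_at_p: "power_fun w p = w$1 - 2 * m"
    if "w$2 = 0" and "w$3 * (w1$3 + w2$3) + w$4 * (w1$4 + w2$4) = k" for w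
  proof -
    have "power_fun w p = w$1 - 2 * (m / k) * (w$3 * (w1$3 + w2$3) + w$4 * (w1$4 + w2$4))"
      using that(1) by (simp add: power_fun_def p_def algebra_simps)
    then show ?thesis
      using that(2) \<open>k > 0\<close> by simp
  qed
  have "w1$3 * (w1$3 + w2$3) + w1$4 * (w1$4 + w2$4) = k" "w2$3 * (w1$3 + w2$3) + w2$4 * (w1$4 + w2$4) = k"
    using w1 w2 by (simp_all add: lorentz_def k_def algebra_simps)
  then have "power_fun w1 p = w1$1 - 2 * m" "power_fun w2 p = w2$1 - 2 * m"
    using value_at_p w1(2) w2(2) by blast+
  then show False
    using disj[of p] abs_ge_self[of "w1$1"] abs_ge_self[of "w2$1"] by (auto simp: m_def)
qed

lemma lorentz_aug_coords_eq_neg1: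
  assumes valid: "valid_oc C1" "valid_oc C2" and "tangent C1 C2"
    and disjoint: "ointerior C1 \<inter> ointerior C2 = {}"
  shows "lorentz (aug_coords C1) (aug_coords C2) = -1"
proof -
  have unit: "lorentz (aug_coords C1) (aug_coords C1) = 1" "lorentz (aug_coords C2) (aug_coords C2) = 1"
    using valid by (simp_all add: lorentz_aug_coords_self)
  have disj: "power_fun (aug_coords C1) p \<ge> 0 \<or> power_fun (aug_coords C2) p \<ge> 0" for p
  proof -
    have "p \<notin> ointerior C1 \<inter> ointerior C2"
      using disjoint by simp
    then show ?thesis
      using valid by (auto simp: ointerior_eq_power_fun_neg)
  qed
  obtain q where q: "q \<in> ext_pts C1 \<inter> ext_pts C2"
    using \<open>tangent C1 C2\<close> unfolding tangent_def by blast
  show ?thesis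
  proof (cases q)
    case None
    then show ?thesis
      using q valid unit disj by (intro lorentz_eq_neg1_if_parallel) (auto simp: None_in_ext_pts_iff)
  next
    case (Some q')
    then show ?thesis
      using q valid unit disj by (intro lorentz_eq_neg1_if_touching) (auto simp: Some_in_ext_pts_iff)
  qed
qed

lemma lorentz_aug_coords_eq_neg1_oriented:
  assumes "valid_oc C1" "valid_oc C2" "tangent C1 C2"
    and "ointerior C1 \<inter> ointerior C2 = {} \<or> ointerior (reverse_oc C1) \<inter> ointerior (reverse_oc C2) = {}"
  shows "lorentz (aug_coords C1) (aug_coords C2) = -1"
  using assms(4)
proof
  assume "ointerior (reverse_oc C1) \<inter> ointerior (reverse_oc C2) = {}"
  then have "lorentz (aug_coords (reverse_oc C1)) (aug_coords (reverse_oc C2)) = -1"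
    using assms(1-3) by (intro lorentz_aug_coords_eq_neg1) (simp_all add: valid_reverse tangent_reverse)
  then show ?thesis
    by (simp add: aug_coords_reverse lorentz_minus_left lorentz_minus_right)
qed (use assms lorentz_aug_coords_eq_neg1 in blast)

section \<open>Null vectors\<close>

text \<open>A null vector represents a point of the extended plane: multiples of (|p|^2, 1, p)
  represent p, multiples of (1, 0, 0, 0) represent infinity.\<close>

definition null_point :: "real^4 \<Rightarrow> (real \<times> real) option" where
  "null_point n = (if n$2 \<noteq> 0 then Some (n$3 / n$2, n$4 / n$2) else None)"

lemma lorentz_self_eq_0_iff: "lorentz n n = 0 \<longleftrightarrow> (n$3)\<^sup>2 + (n$4)\<^sup>2 = n$1 * n$2"
  by (auto simp: lorentz_def power2_eq_square)

lemma null_cocurv_mult_nonneg: "lorentz n n = 0 \<Longrightarrow> n$1 * n$2 \<ge> 0"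
  unfolding lorentz_self_eq_0_iff by (metis add_nonneg_nonneg zero_le_power2)

lemma null_power_fun:
  assumes "lorentz n n = 0"
  shows "n$2 * power_fun n q = (n$3 - n$2 * fst q)\<^sup>2 + (n$4 - n$2 * snd q)\<^sup>2"
  using assms unfolding lorentz_self_eq_0_iff power_fun_def by algebra

lemma null_cocurv_eq_0:
  assumes "lorentz n n = 0" and "n$2 = 0"
  shows "n$3 = 0" and "n$4 = 0"
  using assms by (simp_all add: lorentz_self_eq_0_iff sum_power2_eq_zero_iff)

lemma power_fun_null_point:
  assumes "lorentz n n = 0" and "n$2 \<noteq> 0"
  shows "n$2 * power_fun w (n$3 / n$2, n$4 / n$2) = - 2 * lorentz w n"
proof -
  have "n$2 * power_fun w (n$3 / n$2, n$4 / n$2) =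
      n$2 * w$1 - 2 * (w$3 * n$3 + w$4 * n$4) + w$2 * ((n$3)\<^sup>2 + (n$4)\<^sup>2) / n$2"
    using assms(2) by (simp add: power_fun_def field_simps power2_eq_square)
  also have "\<dots> = n$2 * w$1 - 2 * (w$3 * n$3 + w$4 * n$4) + w$2 * (n$1 * n$2) / n$2"
    using assms(1) by (simp add: lorentz_self_eq_0_iff)
  also have "\<dots> = - 2 * lorentz w n"
    using assms(2) by (simp add: lorentz_def field_simps)
  finally show ?thesis .
qed

lemma null_point_eq_Some_iff:
  assumes w1: "lorentz w1 w1 = 1" and w2: "lorentz w2 w2 = 1" and w12: "lorentz w1 w2 = -1"
    and "w1 + w2 \<noteq> 0"
  shows "null_point (w1 + w2) = Some q \<longleftrightarrow> power_fun w1 q = 0 \<and> power_fun w2 q = 0"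
    and "null_point (w1 + w2) = None \<longleftrightarrow> w1$2 = 0 \<and> w2$2 = 0"
proof -
  define n where "n = w1 + w2"
  have null: "lorentz n n = 0" and orth: "lorentz w1 n = 0" "lorentz w2 n = 0"
    using w1 w2 w12 lorentz_commute[of w2 w1]
    by (simp_all add: n_def lorentz_add_left lorentz_add_right)
  have "n \<noteq> 0"
    using \<open>w1 + w2 \<noteq> 0\<close> by (simp add: n_def)
  have at_infinity: "n$1 \<noteq> 0 \<and> n$3 = 0 \<and> n$4 = 0" if "n$2 = 0"
    using null_cocurv_eq_0[OF null that] \<open>n \<noteq> 0\<close> that by (auto simp: vec_eq_iff forall_4)
  show "null_point n = Some q \<longleftrightarrow> power_fun w1 q = 0 \<and> power_fun w2 q = 0"
  proof
    assume "null_point n = Some q"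
    then have "n$2 \<noteq> 0" and "q = (n$3 / n$2, n$4 / n$2)"
      by (auto simp: null_point_def split: if_splits)
    then show "power_fun w1 q = 0 \<and> power_fun w2 q = 0"
      using power_fun_null_point[OF null \<open>n$2 \<noteq> 0\<close>, of w1]
        power_fun_null_point[OF null \<open>n$2 \<noteq> 0\<close>, of w2] orth by simp
  next
    assume "power_fun w1 q = 0 \<and> power_fun w2 q = 0"
    then have zero: "power_fun n q = 0"
      by (simp add: n_def power_fun_add)
    then have "n$2 \<noteq> 0"
      using at_infinity by (auto simp: power_fun_def)
    moreover have "n$3 = n$2 * fst q" "n$4 = n$2 * snd q"
      using null_power_fun[OF null, of q] zero by (simp_all add: sum_power2_eq_zero_iff)
    ultimately show "null_point n = Some q"
      by (simp add: null_point_def)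
  qed
  show "null_point n = None \<longleftrightarrow> w1$2 = 0 \<and> w2$2 = 0"
  proof
    assume "null_point n = None"
    then have "n$2 = 0"
      by (simp add: null_point_def split: if_splits)
    then have "w1$2 = 0"
      using orth(1) at_infinity by (simp add: lorentz_def)
    then show "w1$2 = 0 \<and> w2$2 = 0"
      using \<open>n$2 = 0\<close> by (simp add: n_def)
  qed (simp add: n_def null_point_def)
qed

lemma tangent_if_lorentz_eq_neg1:
  assumes valid: "valid_oc C1" "valid_oc C2"
    and "lorentz (aug_coords C1) (aug_coords C2) = -1" and "aug_coords C1 + aug_coords C2 \<noteq> 0"
  shows "tangent C1 C2" and "tangency_point C1 C2 = null_point (aug_coords C1 + aug_coords C2)"
proof -
  note null_point_iff = null_point_eq_Some_iff[OF lorentz_aug_coords_self[OF valid(1)]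
      lorentz_aug_coords_self[OF valid(2)] assms(3,4)]
  have "Some q \<in> ext_pts C1 \<inter> ext_pts C2 \<longleftrightarrow> null_point (aug_coords C1 + aug_coords C2) = Some q" for q
    using valid null_point_iff(1) by (simp add: Some_in_ext_pts_iff)
  moreover have "None \<in> ext_pts C1 \<inter> ext_pts C2 \<longleftrightarrow> null_point (aug_coords C1 + aug_coords C2) = None"
    using valid null_point_iff(2) by (simp add: None_in_ext_pts_iff)
  ultimately have "x \<in> ext_pts C1 \<inter> ext_pts C2 \<longleftrightarrow> x = null_point (aug_coords C1 + aug_coords C2)" for x
    by (cases x) auto
  then have "ext_pts C1 \<inter> ext_pts C2 = {null_point (aug_coords C1 + aug_coords C2)}"
    by blast
  then show "tangent C1 C2" and "tangency_point C1 C2 = null_point (aug_coords C1 + aug_coords C2)"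
    by (simp_all add: tangent_def tangency_point_def)
qed

lemma null_point_neq:
  assumes n: "lorentz n n = 0" and m: "lorentz m m = 0" and "lorentz n m \<noteq> 0"
  shows "null_point n \<noteq> null_point m"
proof
  assume eq: "null_point n = null_point m"
  show False
  proof (cases "n$2 = 0")
    case True
    then have "m$2 = 0"
      using eq by (auto simp: null_point_def split: if_splits)
    then show False
      using True null_cocurv_eq_0[OF n] null_cocurv_eq_0[OF m] \<open>lorentz n m \<noteq> 0\<close>
      by (simp add: lorentz_def)
  next
    case False
    then have "m$2 \<noteq> 0" and pt: "(n$3 / n$2, n$4 / n$2) = (m$3 / m$2, m$4 / m$2)"
      using eq by (auto simp: null_point_def split: if_splits)
    have "power_fun m (m$3 / m$2, m$4 / m$2) = 0"
      using power_fun_null_point[OF m \<open>m$2 \<noteq> 0\<close>, of m] m \<open>m$2 \<noteq> 0\<close> by simp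
    then have "lorentz m n = 0"
      using power_fun_null_point[OF n False, of m] pt by simp
    then show False
      using \<open>lorentz n m \<noteq> 0\<close> by (simp add: lorentz_commute)
  qed
qed

lemma power_fun_nonneg_if_future_null:
  assumes null: "lorentz n n = 0" and future: "n$1 + n$2 > 0"
  shows "power_fun n p \<ge> 0"
proof -
  have "n$2 \<ge> 0"
    using null_cocurv_mult_nonneg[OF null] future by (auto simp: zero_le_mult_iff)
  show ?thesis
  proof (cases "n$2 = 0")
    case True
    then show ?thesis
      using null_cocurv_eq_0[OF null] future by (simp add: power_fun_def)
  next
    case False
    have "n$2 * power_fun n p \<ge> 0"
      using null_power_fun[OF null, of p] by simp
    then show ?thesis
      using False \<open>n$2 \<ge> 0\<close> by (simp add: zero_le_mult_iff)
  qed
qed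

text \<open>Reverse Cauchy-Schwarz: null vectors in opposite halves of the light cone, as told by the
  sign of n1 + n2, have nonnegative Lorentz product.\<close>

lemma null_same_half_cone:
  assumes n: "lorentz n n = 0" and m: "lorentz m m = 0" and "lorentz n m < 0"
  shows "(n$1 + n$2) * (m$1 + m$2) > 0"
proof (rule ccontr)
  assume opposite: "\<not> (n$1 + n$2) * (m$1 + m$2) > 0"
  define s c where "s = n$3 * m$3 + n$4 * m$4" and "c = n$1 * m$2 + n$2 * m$1"
  have nn: "n$1 * n$2 = (n$3)\<^sup>2 + (n$4)\<^sup>2" and mm: "m$1 * m$2 = (m$3)\<^sup>2 + (m$4)\<^sup>2"
    using n m by (simp_all add: lorentz_self_eq_0_iff)
  have "s\<^sup>2 + (n$3 * m$4 - n$4 * m$3)\<^sup>2 = (n$1 * n$2) * (m$1 * m$2)"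
    unfolding s_def nn mm by algebra
  moreover have "c\<^sup>2 = 4 * ((n$1 * n$2) * (m$1 * m$2)) + (n$1 * m$2 - n$2 * m$1)\<^sup>2"
    unfolding c_def by algebra
  ultimately have "(2 * s)\<^sup>2 \<le> c\<^sup>2"
    by (simp add: power_mult_distrib) (smt (verit) zero_le_power2)
  moreover have "c \<le> 0"
    using opposite null_cocurv_mult_nonneg[OF n] null_cocurv_mult_nonneg[OF m] unfolding c_def
    by (smt (verit, del_insts) mult_le_0_iff mult_neg_pos mult_pos_neg)
  ultimately have "2 * s \<ge> c"
    by (smt (verit) abs_le_square_iff abs_le_iff)
  then show False
    using \<open>lorentz n m < 0\<close> by (simp add: lorentz_def s_def c_def)
qed

lemma future_null_if_cocurv_sum_pos:
  assumes n: "lorentz n n = 0" and m: "lorentz m m = 0" and "lorentz n m < 0" and "n$2 + m$2 > 0"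
  shows "n$1 + n$2 > 0"
  using null_same_half_cone[OF assms(1-3)] null_cocurv_mult_nonneg[OF n] null_cocurv_mult_nonneg[OF m]
    \<open>n$2 + m$2 > 0\<close>
  by (smt (verit) zero_le_mult_iff zero_less_mult_iff)

section \<open>Gram condition for four circles\<close>

definition descartes_gram :: "(real^4) list \<Rightarrow> bool" where
  "descartes_gram ws \<longleftrightarrow> length ws = 4 \<and>
     (\<forall>i<4. \<forall>k<4. lorentz (ws ! i) (ws ! k) = (if i = k then 1 else -1))"

lemma descartes_gram_aug_coords:
  assumes "oriented_descartes D"
  shows "descartes_gram (map aug_coords (clist D))"
proof -
  let ?L = "clist D"
  have valid: "\<forall>i<4. valid_oc (?L ! i)"
    and tangent: "\<forall>i<4. \<forall>k<4. i \<noteq> k \<longrightarrow> tangent (?L ! i) (?L ! k)"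
    and disjoint: "(\<forall>i<4. \<forall>k<4. i \<noteq> k \<longrightarrow> ointerior (?L ! i) \<inter> ointerior (?L ! k) = {}) \<or>
       (\<forall>i<4. \<forall>k<4. i \<noteq> k \<longrightarrow> ointerior (reverse_oc (?L ! i)) \<inter> ointerior (reverse_oc (?L ! k)) = {})"
    using assms unfolding oriented_descartes_def descartes_config_def Let_def by blast+
  have "lorentz (aug_coords (?L ! i)) (aug_coords (?L ! k)) = (if i = k then 1 else -1)"
    if "i < 4" "k < 4" for i k
  proof (cases "i = k")
    case False
    have "ointerior (?L ! i) \<inter> ointerior (?L ! k) = {} \<or>
        ointerior (reverse_oc (?L ! i)) \<inter> ointerior (reverse_oc (?L ! k)) = {}"
      using disjoint that False by blast
    then show ?thesis
      using that valid tangent False by (simp add: lorentz_aug_coords_eq_neg1_oriented)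
  qed (use that valid lorentz_aug_coords_self in auto)
  then show ?thesis
    by (simp add: descartes_gram_def)
qed

lemma descartes_gram_uminus: "descartes_gram ws \<Longrightarrow> descartes_gram (map uminus ws)"
  by (auto simp: descartes_gram_def lorentz_minus_left lorentz_minus_right)

lemma lorentz_sum_descartes_gram:
  assumes "descartes_gram ws" and "i < 4"
  shows "lorentz (ws ! i) (\<Sum>l<4. ws ! l) = -2"
proof -
  have "lorentz (ws ! i) (\<Sum>l<4. ws ! l) = (\<Sum>l<4. if i = l then 1 else -1)"
    using assms by (simp add: lorentz_sum_right descartes_gram_def)
  also have "\<dots> = -2"
    using assms(2) by (auto simp: eval_nat_numeral less_Suc_eq)
  finally show ?thesis .
qed

lemma pair_sum_ne_0_descartes_gram:
  assumes "descartes_gram ws" and "i < 4" and "k < 4"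
  shows "ws ! i + ws ! k \<noteq> 0"
proof
  assume "ws ! i + ws ! k = 0"
  then have "lorentz (\<Sum>l<4. ws ! l) (ws ! i + ws ! k) = 0"
    by (simp add: lorentz_def)
  then show False
    using assms lorentz_sum_descartes_gram
    by (simp add: lorentz_add_right lorentz_commute[of "\<Sum>l<4. ws ! l"])
qed

lemma lorentz_pair_sums_ne_0:
  assumes "descartes_gram ws" and "i < j" "j < 4" "i' < j'" "j' < 4" and "(i, j) \<noteq> (i', j')"
  shows "lorentz (ws ! i + ws ! j) (ws ! i' + ws ! j') \<noteq> 0"
  using assms by (auto simp: descartes_gram_def lorentz_add_left lorentz_add_right split: if_splits)

lemma descartes_config_circle_of:
  assumes "descartes_gram [w1, w2, w3, w4]"
  shows "descartes_config (circle_of w1, circle_of w2, circle_of w3, circle_of w4)"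
proof -
  define ws L where "ws = [w1, w2, w3, w4]" and "L = clist (circle_of w1, circle_of w2, circle_of w3, circle_of w4)"
  have gram: "descartes_gram ws"
    using assms by (simp add: ws_def)
  have L: "L ! i = circle_of (ws ! i)" if "i < 4" for i
    using that nth_map[of i ws circle_of] by (simp add: ws_def L_def)
  have unit: "lorentz (ws ! i) (ws ! i) = 1" if "i < 4" for i
    using gram that by (simp add: descartes_gram_def)
  have valid: "valid_oc (L ! i)" if "i < 4" for i
    using unit that by (simp add: L valid_circle_of)
  have tangency: "tangent (L ! i) (L ! k) \<and> tangency_point (L ! i) (L ! k) = null_point (ws ! i + ws ! k)"
    if "i < 4" "k < 4" "i \<noteq> k" for i k
    using tangent_if_lorentz_eq_neg1[OF valid valid] that gram pair_sum_ne_0_descartes_gram[OF gram]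
    by (simp add: L aug_coords_circle_of unit descartes_gram_def)
  have "inj_on (\<lambda>(i, k). null_point (ws ! i + ws ! k)) {(i, k). i < k \<and> k < 4}"
  proof (rule inj_onI, clarsimp)
    fix i k i' k'
    assume "i < k" "k < 4" "i' < k'" "k' < 4" and eq: "null_point (ws ! i + ws ! k) = null_point (ws ! i' + ws ! k')"
    have null: "lorentz (ws ! a + ws ! b) (ws ! a + ws ! b) = 0" if "a < b" "b < 4" for a b
      using gram that by (simp add: descartes_gram_def lorentz_add_left lorentz_add_right)
    show "i = i' \<and> k = k'"
      using null_point_neq[OF null null] lorentz_pair_sums_ne_0[OF gram] eq
        \<open>i < k\<close> \<open>k < 4\<close> \<open>i' < k'\<close> \<open>k' < 4\<close> by blast
  qed
  moreover have "inj_on (\<lambda>(i, k). null_point (ws ! i + ws ! k)) {(i, k). i < k \<and> k < 4} \<longleftrightarrow>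
      inj_on (\<lambda>(i, k). tangency_point (L ! i) (L ! k)) {(i, k). i < k \<and> k < 4}"
    using tangency by (intro inj_on_cong) auto
  ultimately show ?thesis
    unfolding descartes_config_def Let_def L_def[symmetric] using valid tangency by auto
qed

text \<open>The null vectors w_i + w_k and S - (w_i + w_k), S the sum of all four rows, have Lorentz
  product -4, so they lie in the same half of the light cone; a positive total curvature selects
  the half on which power functions are nonnegative.\<close>

lemma disjoint_interiors_circle_of:
  assumes gram: "descartes_gram ws" and pos: "(\<Sum>l<4. (ws ! l)$2) > 0"
    and "i < 4" "k < 4" "i \<noteq> k"
  shows "ointerior (circle_of (ws ! i)) \<inter> ointerior (circle_of (ws ! k)) = {}"
proof -
  define S n where "S = (\<Sum>l<4. ws ! l)" and "n = ws ! i + ws ! k"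
  have nS: "lorentz n S = -4"
    using lorentz_sum_descartes_gram[OF gram] assms by (simp add: n_def S_def lorentz_add_left)
  have row: "lorentz S (ws ! l) = -2" if "l < 4" for l
    using lorentz_sum_descartes_gram[OF gram that] lorentz_commute by (metis S_def)
  have "lorentz S S = (\<Sum>l<4. lorentz S (ws ! l))"
    using lorentz_sum_right[of S "\<lambda>l. ws ! l" "{..<4}"] by (simp add: S_def[symmetric])
  also have "\<dots> = -8"
    by (simp add: row)
  finally have SS: "lorentz S S = -8" .
  have nn: "lorentz n n = 0"
    using gram assms by (simp add: n_def descartes_gram_def lorentz_add_left lorentz_add_right)
  have "lorentz (S - n) (S - n) = 0" and "lorentz n (S - n) < 0"
    using nS SS nn lorentz_commute[of n S] by (simp_all add: lorentz_diff_left lorentz_diff_right)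
  moreover have "n$2 + (S - n)$2 > 0"
    using pos by (simp add: S_def)
  ultimately have "n$1 + n$2 > 0"
    using future_null_if_cocurv_sum_pos[OF nn] by blast
  then have nonneg: "power_fun (ws ! i) p + power_fun (ws ! k) p \<ge> 0" for p
    using power_fun_nonneg_if_future_null[OF nn] by (simp add: n_def power_fun_add)
  have "lorentz (ws ! i) (ws ! i) = 1" "lorentz (ws ! k) (ws ! k) = 1"
    using gram assms by (simp_all add: descartes_gram_def)
  then have "p \<notin> ointerior (circle_of (ws ! i)) \<inter> ointerior (circle_of (ws ! k))" for p
    using nonneg[of p] by (simp add: ointerior_circle_of)
  then show ?thesis
    by blast
qed

lemma oriented_descartes_circle_of:
  assumes gram: "descartes_gram [w1, w2, w3, w4]" and "w1$2 + w2$2 + w3$2 + w4$2 \<noteq> 0"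
  shows "oriented_descartes (circle_of w1, circle_of w2, circle_of w3, circle_of w4)"
proof -
  define ws where "ws = [w1, w2, w3, w4]"
  have L: "clist (circle_of w1, circle_of w2, circle_of w3, circle_of w4) ! i = circle_of (ws ! i)" if "i < 4" for i
    using that nth_map[of i ws circle_of] by (simp add: ws_def)
  have unit: "lorentz (ws ! i) (ws ! i) = 1" if "i < 4" for i
    using gram that by (simp add: ws_def descartes_gram_def)
  have len: "length ws = 4"
    by (simp add: ws_def)
  have gram': "descartes_gram (map uminus ws)"
    by (rule descartes_gram_uminus) (simp add: ws_def gram)
  consider "(\<Sum>l<4. (ws ! l)$2) > 0" | "(\<Sum>l<4. (map uminus ws ! l)$2) > 0"
    using assms(2) by (fastforce simp: ws_def eval_nat_numeral)
  then have "(\<forall>i<4. \<forall>k<4. i \<noteq> k \<longrightarrow> ointerior (circle_of (ws ! i)) \<inter> ointerior (circle_of (ws ! k)) = {}) \<or>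
      (\<forall>i<4. \<forall>k<4. i \<noteq> k \<longrightarrow>
        ointerior (reverse_oc (circle_of (ws ! i))) \<inter> ointerior (reverse_oc (circle_of (ws ! k))) = {})"
  proof cases
    case 1
    then show ?thesis
      using disjoint_interiors_circle_of[OF gram[folded ws_def]] by blast
  next
    case 2
    have "ointerior (reverse_oc (circle_of (ws ! i))) \<inter> ointerior (reverse_oc (circle_of (ws ! k))) = {}"
      if "i < 4" "k < 4" "i \<noteq> k" for i k
      using disjoint_interiors_circle_of[OF gram' 2 that] that unit by (simp add: reverse_circle_of len)
    then show ?thesis
      by blast
  qed
  then show ?thesis
    unfolding oriented_descartes_def Let_def using descartes_config_circle_of[OF gram] L
    by (simp del: clist.simps)
qed

lemma eq_if_drop_cocurv_eq_lorentz:
  assumes "drop_cocurv x = drop_cocurv y" and "z$2 \<noteq> 0" and "lorentz x z = lorentz y z"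
  shows "x = y"
proof -
  have same: "x$2 = y$2" "x$3 = y$3" "x$4 = y$4"
    using assms(1) by (simp_all add: drop_cocurv_eq_iff)
  have "x$1 = y$1"
    using assms(2,3) unfolding lorentz_def same by simp
  then show ?thesis
    using same by (simp add: vec_eq_iff forall_4)
qed

lemma eq_if_drop_cocurv_eq_unit:
  assumes "drop_cocurv x = drop_cocurv y" and "x$2 \<noteq> 0" and "lorentz x x = 1" and "lorentz y y = 1"
  shows "x = y"
proof -
  have same: "x$2 = y$2" "x$3 = y$3" "x$4 = y$4"
    using assms(1) by (simp_all add: drop_cocurv_eq_iff)
  have "(x$1 - y$1) * x$2 = 0"
    using assms(3,4) unfolding lorentz_def by (simp add: same algebra_simps)
  then have "x$1 = y$1"
    using assms(2) by simp
  then show ?thesis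
    using same by (simp add: vec_eq_iff forall_4)
qed

lemma descartes_gram_unique:
  assumes gram: "descartes_gram ws" and gram': "descartes_gram ws'"
    and drop: "map drop_cocurv ws = map drop_cocurv ws'" and "i < 4" and "(ws ! i)$2 \<noteq> 0"
  shows "ws = ws'"
proof -
  have len: "length ws = 4" "length ws' = 4"
    using gram gram' by (simp_all add: descartes_gram_def)
  have drop_nth: "drop_cocurv (ws ! k) = drop_cocurv (ws' ! k)" if "k < 4" for k
    using arg_cong[OF drop, of "\<lambda>xs. xs ! k"] that len by simp
  have "ws ! i = ws' ! i"
    using eq_if_drop_cocurv_eq_unit[OF drop_nth] assms(4,5) gram gram' by (simp add: descartes_gram_def)
  have "ws ! k = ws' ! k" if "k < 4" for k
  proof (rule eq_if_drop_cocurv_eq_lorentz[OF drop_nth[OF that] assms(5)])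
    have "lorentz (ws ! k) (ws ! i) = (if k = i then 1 else -1)"
      and "lorentz (ws' ! k) (ws' ! i) = (if k = i then 1 else -1)"
      using that assms(4) gram gram' by (simp_all add: descartes_gram_def)
    then show "lorentz (ws ! k) (ws ! i) = lorentz (ws' ! k) (ws ! i)"
      using \<open>ws ! i = ws' ! i\<close> by simp
  qed
  then show ?thesis
    using len by (simp add: list_eq_iff_nth_eq)
qed

section \<open>The augmented Euclidean Descartes theorem\<close>

text \<open>Q_W of the paper's augmented Euclidean Descartes theorem W^T Q_D W = Q_W; its lower right
  3x3 block is target3, and lorentz is the bilinear form of 2 QW_inv.\<close>

definition QW :: "real^4^4" where
  "QW = vector [vector [0, -4, 0, 0], vector [-4, 0, 0, 0], vector [0, 0, 2, 0], vector [0, 0, 0, 2]]"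

definition QW_inv :: "real^4^4" where
  "QW_inv = vector [vector [0, -1/4, 0, 0], vector [-1/4, 0, 0, 0], vector [0, 0, 1/2, 0], vector [0, 0, 0, 1/2]]"

lemma QD_mult_QD: "QD ** QD = mat 1"
  by (simp add: vec_eq_iff forall_4 QD_def matrix_matrix_mult_def sum_4 mat_def)

lemma QW_inv_mult_QW: "QW_inv ** QW = mat 1"
  by (simp add: vec_eq_iff forall_4 QW_def QW_inv_def matrix_matrix_mult_def sum_4 mat_def)

lemma gram_QW_inv_entry: "(W ** QW_inv ** transpose W) $ i $ k = lorentz (W$i) (W$k) / 2"
  by (simp add: QW_inv_def matrix_matrix_mult_def sum_4 transpose_def lorentz_def field_simps)

lemma eq_right_inverse_iff:
  fixes A B X :: "'a::field^'n^'n"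
  assumes "A ** B = mat 1"
  shows "X = B \<longleftrightarrow> X ** A = mat 1"
proof
  assume "X ** A = mat 1"
  then have "X = X ** (A ** B)"
    using assms by simp
  also have "\<dots> = B"
    by (simp add: matrix_mul_assoc \<open>X ** A = mat 1\<close>)
  finally show "X = B" .
qed (use assms matrix_left_right_inverse1 in blast)

lemma gram_eq_QD_iff: "W ** QW_inv ** transpose W = QD \<longleftrightarrow> transpose W ** QD ** W = QW"
proof -
  have "W ** QW_inv ** transpose W = QD \<longleftrightarrow> W ** QW_inv ** transpose W ** QD = mat 1"
    by (rule eq_right_inverse_iff[OF QD_mult_QD])
  also have "\<dots> \<longleftrightarrow> W ** (QW_inv ** transpose W ** QD) = mat 1"
    by (simp add: matrix_mul_assoc)
  also have "\<dots> \<longleftrightarrow> QW_inv ** transpose W ** QD ** W = mat 1"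
    by (rule matrix_left_right_inverse)
  also have "\<dots> \<longleftrightarrow> QW_inv ** (transpose W ** QD ** W) = mat 1"
    by (simp add: matrix_mul_assoc)
  also have "\<dots> \<longleftrightarrow> transpose W ** QD ** W ** QW_inv = mat 1"
    by (rule matrix_left_right_inverse)
  also have "\<dots> \<longleftrightarrow> transpose W ** QD ** W = QW"
    by (rule eq_right_inverse_iff[OF QW_inv_mult_QW, symmetric])
  finally show ?thesis .
qed

lemma gram_vector_eq_QD_iff:
  assumes "length ws = 4"
  shows "vector ws ** QW_inv ** transpose (vector ws) = QD \<longleftrightarrow> descartes_gram ws"
proof -
  obtain a b c d where ws: "ws = [a, b, c, d]"
    using assms by (auto simp: length_Suc_conv numeral_eq_Suc)
  show ?thesis
    unfolding ws by (simp add: vec_eq_iff forall_4 gram_QW_inv_entry QD_def descartes_gram_def all_less_4)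
qed

lemma descartes_gram_rows:
  assumes "transpose W ** QD ** W = QW"
  shows "descartes_gram [W$1, W$2, W$3, W$4]"
proof -
  have "vector [W$1, W$2, W$3, W$4] = W"
    by (simp add: vec_eq_iff forall_4)
  then show ?thesis
    using assms gram_eq_QD_iff gram_vector_eq_QD_iff[of "[W$1, W$2, W$3, W$4]"] by simp
qed

definition descartes_form :: "real^4 \<Rightarrow> real^4 \<Rightarrow> real" where
  "descartes_form u v = u$1 * v$1 + u$2 * v$2 + u$3 * v$3 + u$4 * v$4
     - (u$1 + u$2 + u$3 + u$4) * (v$1 + v$2 + v$3 + v$4) / 2"

lemma transpose_QD_entry:
  fixes A :: "real^'n^4"
  shows "(transpose A ** QD ** A) $ j $ k = descartes_form (column j A) (column k A)"
  by (simp add: matrix_matrix_mult_def transpose_def QD_def sum_4 descartes_form_def column_def field_simps)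

lemma descartes_form_commute: "descartes_form u v = descartes_form v u"
  by (simp add: descartes_form_def algebra_simps)

lemma descartes_form_add_left: "descartes_form (u + v) w = descartes_form u w + descartes_form v w"
  and descartes_form_diff_left: "descartes_form (u - v) w = descartes_form u w - descartes_form v w"
  and descartes_form_scaleR_left: "descartes_form (a *\<^sub>R u) w = a * descartes_form u w"
  and descartes_form_add_right: "descartes_form w (u + v) = descartes_form w u + descartes_form w v"
  and descartes_form_scaleR_right: "descartes_form w (a *\<^sub>R u) = a * descartes_form w u"
  by (simp_all add: descartes_form_def field_simps)

lemma descartes_form_nondegenerate:
  assumes "b \<noteq> 0"
  shows "\<exists>u. descartes_form u b \<noteq> 0"
proof (rule ccontr)
  assume "\<nexists>u. descartes_form u b \<noteq> 0"
  then have orth: "descartes_form u b = 0" for u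
    by blast
  define \<sigma> where "\<sigma> = b$1 + b$2 + b$3 + b$4"
  have b: "b$1 = \<sigma> / 2" "b$2 = \<sigma> / 2" "b$3 = \<sigma> / 2" "b$4 = \<sigma> / 2"
    using orth[of "vector [1, 0, 0, 0]"] orth[of "vector [0, 1, 0, 0]"]
      orth[of "vector [0, 0, 1, 0]"] orth[of "vector [0, 0, 0, 1]"]
    by (simp_all add: descartes_form_def \<sigma>_def)
  then have "\<sigma> = 0"
    unfolding \<sigma>_def by (simp add: field_simps)
  then have "b = 0"
    using b by (simp add: vec_eq_iff forall_4)
  then show False
    using assms by simp
qed

lemma exists_null_completion:
  assumes "b \<noteq> 0" and bb: "descartes_form b b = 0" and b_x: "descartes_form b x = 0"
    and b_y: "descartes_form b y = 0" and xx: "descartes_form x x = 2" and yy: "descartes_form y y = 2"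
    and xy: "descartes_form x y = 0"
  obtains v where "descartes_form v v = 0" "descartes_form v b = -4"
    "descartes_form v x = 0" "descartes_form v y = 0"
proof -
  obtain u where "descartes_form u b \<noteq> 0"
    using descartes_form_nondegenerate[OF \<open>b \<noteq> 0\<close>] by blast
  define u' where "u' = u - (descartes_form u x / 2) *\<^sub>R x - (descartes_form u y / 2) *\<^sub>R y"
  have u'x: "descartes_form u' x = 0" and u'y: "descartes_form u' y = 0"
    and u'b: "descartes_form u' b = descartes_form u b"
    using xx yy xy b_x b_y descartes_form_commute[of x y] descartes_form_commute[of x b] descartes_form_commute[of y b]
    by (simp_all add: u'_def descartes_form_diff_left descartes_form_scaleR_left)
  define \<alpha> where "\<alpha> = -4 / descartes_form u b"
  define \<gamma> where "\<gamma> = - \<alpha> * descartes_form u' u' / (2 * descartes_form u b)"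
  define v where "v = \<alpha> *\<^sub>R u' + \<gamma> *\<^sub>R b"
  have "descartes_form v b = \<alpha> * descartes_form u' b + \<gamma> * descartes_form b b"
    unfolding v_def by (simp only: descartes_form_add_left descartes_form_scaleR_left)
  then have "descartes_form v b = -4"
    using u'b bb \<open>descartes_form u b \<noteq> 0\<close> by (simp add: \<alpha>_def)
  moreover have "descartes_form v x = 0" "descartes_form v y = 0"
    using u'x u'y b_x b_y by (simp_all add: v_def descartes_form_add_left descartes_form_scaleR_left)
  moreover have "descartes_form v v = \<alpha> * \<alpha> * descartes_form u' u' + 2 * \<alpha> * \<gamma> * descartes_form u' b
      + \<gamma> * \<gamma> * descartes_form b b"
    using descartes_form_commute[of b u']
    by (simp add: v_def descartes_form_add_left descartes_form_scaleR_left descartes_form_add_right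
        descartes_form_scaleR_right algebra_simps)
  then have "descartes_form v v = 0"
    using bb u'b \<open>descartes_form u b \<noteq> 0\<close> by (simp add: \<gamma>_def field_simps)
  ultimately show ?thesis
    using that by blast
qed

lemma descartes_null_sum_ne_0:
  assumes "descartes_form b b = 0" and "b \<noteq> 0"
  shows "b$1 + b$2 + b$3 + b$4 \<noteq> 0"
proof
  assume "b$1 + b$2 + b$3 + b$4 = 0"
  then have "(b$1)\<^sup>2 + (b$2)\<^sup>2 + (b$3)\<^sup>2 + (b$4)\<^sup>2 = 0"
    using assms(1) by (simp add: descartes_form_def power2_eq_square)
  then have "b = 0"
    by (simp add: vec_eq_iff forall_4 add_nonneg_eq_0_iff)
  then show False
    using assms(2) by simp
qed

definition descartes_solution :: "real^3^4 \<Rightarrow> bool" where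
  "descartes_solution M \<longleftrightarrow> column 1 M \<noteq> 0 \<and> transpose M ** QD ** M = target3"

lemma exists_augmented_matrix:
  fixes M :: "real^3^4"
  assumes "descartes_solution M"
  obtains W :: "real^4^4" where "\<And>i. M $ i = drop_cocurv (W $ i)" and "transpose W ** QD ** W = QW"
proof -
  have M: "column 1 M \<noteq> 0" "transpose M ** QD ** M = target3"
    using assms by (simp_all add: descartes_solution_def)
  define b x y where "b = column 1 M" and "x = column 2 M" and "y = column 3 M"
  have form: "descartes_form (column j M) (column k M) = target3 $ j $ k" for j k
    using M(2) transpose_QD_entry[of M j k] by simp
  have bb: "descartes_form b b = 0" and bx: "descartes_form b x = 0" and b_y: "descartes_form b y = 0"
    and xx: "descartes_form x x = 2" and yy: "descartes_form y y = 2" and xy: "descartes_form x y = 0"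
    using form[of 1 1] form[of 1 2] form[of 1 3] form[of 2 2] form[of 3 3] form[of 2 3]
    by (simp_all add: b_def x_def y_def target3_def)
  obtain v where v: "descartes_form v v = 0" "descartes_form v b = -4"
    "descartes_form v x = 0" "descartes_form v y = 0"
    using exists_null_completion[OF _ bb bx b_y xx yy xy] M(1) by (auto simp: b_def)
  define W :: "real^4^4" where "W = (\<chi> i. vector [v$i, b$i, x$i, y$i])"
  have cols: "column 1 W = v" "column 2 W = b" "column 3 W = x" "column 4 W = y"
    by (simp_all add: W_def column_def vec_eq_iff)
  have "descartes_form b v = -4" "descartes_form x v = 0" "descartes_form y v = 0"
    "descartes_form x b = 0" "descartes_form y b = 0" "descartes_form y x = 0"
    using v bx b_y xy descartes_form_commute by metis+
  then have "transpose W ** QD ** W = QW"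
    using v bb bx b_y xx yy xy by (simp add: vec_eq_iff forall_4 transpose_QD_entry cols QW_def)
  moreover have "M $ i = drop_cocurv (W $ i)" for i
    by (simp add: W_def drop_cocurv_def b_def x_def y_def column_def vec_eq_iff forall_3)
  ultimately show ?thesis
    using that by blast
qed

lemma descartes_solution_if_augmented:
  fixes M :: "real^3^4" and W :: "real^4^4"
  assumes rows: "\<And>i. M $ i = drop_cocurv (W $ i)" and W: "transpose W ** QD ** W = QW"
  shows "descartes_solution M"
proof -
  have cols: "column 1 M = column 2 W" "column 2 M = column 3 W" "column 3 M = column 4 W"
    by (simp_all add: rows column_def drop_cocurv_def vec_eq_iff)
  have form: "descartes_form (column j W) (column k W) = QW $ j $ k" for j k
    using W transpose_QD_entry[of W j k] by simp
  have "transpose M ** QD ** M = target3"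
    by (simp add: vec_eq_iff forall_3 transpose_QD_entry cols form QW_def target3_def)
  moreover have "column 1 M \<noteq> 0"
  proof
    assume "column 1 M = 0"
    then have "descartes_form (column 1 W) (column 2 W) = 0"
      using cols by (simp add: descartes_form_def)
    then show False
      using form[of 1 2] by (simp add: QW_def)
  qed
  ultimately show ?thesis
    by (simp add: descartes_solution_def)
qed

lemma MD_row: "MD D $ i = drop_cocurv (vector (map aug_coords (clist D)) $ i)"
  by (cases D) (use exhaust_4[of i] in \<open>auto simp: mvec_eq_drop_cocurv\<close>)

lemma drop_cocurv_aug_coords_clist:
  "map drop_cocurv (map aug_coords (clist D)) = [MD D $ 1, MD D $ 2, MD D $ 3, MD D $ 4]"
  by (cases D) (simp add: mvec_eq_drop_cocurv)

lemma descartes_solution_MD: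
  assumes "oriented_descartes D"
  shows "descartes_solution (MD D)"
proof -
  define W :: "real^4^4" where "W = vector (map aug_coords (clist D))"
  have "W ** QW_inv ** transpose W = QD"
    using descartes_gram_aug_coords[OF assms] gram_vector_eq_QD_iff by (simp add: W_def)
  then have "transpose W ** QD ** W = QW"
    by (simp add: gram_eq_QD_iff)
  then show ?thesis
    using descartes_solution_if_augmented[OF MD_row] by (simp add: W_def)
qed

lemma MD_inj:
  assumes D: "oriented_descartes D" and D': "oriented_descartes D'" and eq: "MD D = MD D'"
  shows "D = D'"
proof -
  define ws ws' where "ws = map aug_coords (clist D)" and "ws' = map aug_coords (clist D')"
  have "column 1 (MD D) \<noteq> 0"
    using descartes_solution_MD[OF D] by (simp add: descartes_solution_def)
  then have "\<not> (\<forall>i<4. (ws ! i)$2 = 0)"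
    by (cases D) (auto simp: ws_def all_less_4 column_def vec_eq_iff forall_4 mvec_eq_drop_cocurv drop_cocurv_def)
  then obtain i where "i < 4" "(ws ! i)$2 \<noteq> 0"
    by blast
  moreover have "map drop_cocurv ws = map drop_cocurv ws'"
    using eq by (simp only: ws_def ws'_def drop_cocurv_aug_coords_clist)
  ultimately have "ws = ws'"
    using descartes_gram_unique descartes_gram_aug_coords D D' by (simp add: ws_def ws'_def)
  moreover have "map circle_of ws = clist D" "map circle_of ws' = clist D'"
    using valid_of_oriented_descartes[OF D] valid_of_oriented_descartes[OF D']
    by (simp_all add: ws_def ws'_def circle_of_aug_coords cong: map_cong)
  ultimately show ?thesis
    by (simp add: clist_inj)
qed

lemma cocurv_sum_ne_0_if_augmented:
  assumes rows: "\<And>i. M $ i = drop_cocurv (W $ i)" and W: "transpose W ** QD ** W = QW"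
    and "column 1 M \<noteq> 0"
  shows "W$1$2 + W$2$2 + W$3$2 + W$4$2 \<noteq> 0"
proof -
  have col: "column 2 W = column 1 M"
    by (simp add: rows column_def drop_cocurv_def vec_eq_iff)
  have "descartes_form (column 2 W) (column 2 W) = 0"
    using W transpose_QD_entry[of W 2 2] by (simp add: QW_def)
  then have "(column 2 W)$1 + (column 2 W)$2 + (column 2 W)$3 + (column 2 W)$4 \<noteq> 0"
    using descartes_null_sum_ne_0 assms(3) col by simp
  then show ?thesis
    by (simp add: column_def)
qed

lemma MD_circle_of_rows:
  assumes rows: "\<And>i. M $ i = drop_cocurv (W $ i)" and W: "transpose W ** QD ** W = QW"
  shows "MD (circle_of (W$1), circle_of (W$2), circle_of (W$3), circle_of (W$4)) = M"
proof -
  have "W ** QW_inv ** transpose W = QD"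
    using W by (simp add: gram_eq_QD_iff)
  then have "lorentz (W$i) (W$i) / 2 = QD $ i $ i" for i
    by (metis gram_QW_inv_entry)
  then have "lorentz (W$i) (W$i) = 1" for i
    by (simp add: QD_def)
  then show ?thesis
    using rows by (simp add: vec_eq_iff forall_4 mvec_eq_drop_cocurv aug_coords_circle_of)
qed

lemma ex1_oriented_descartes_if_solution:
  assumes "descartes_solution M"
  shows "\<exists>!D. oriented_descartes D \<and> MD D = M"
proof -
  obtain W where rows: "\<And>i. M $ i = drop_cocurv (W $ i)" and W: "transpose W ** QD ** W = QW"
    using exists_augmented_matrix[OF assms] by blast
  define D where "D = (circle_of (W$1), circle_of (W$2), circle_of (W$3), circle_of (W$4))"
  have "oriented_descartes D"
    unfolding D_def using descartes_gram_rows[OF W] assms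
    by (intro oriented_descartes_circle_of cocurv_sum_ne_0_if_augmented[OF rows W])
      (simp_all add: descartes_solution_def)
  moreover have "MD D = M"
    unfolding D_def using rows W by (rule MD_circle_of_rows)
  ultimately show ?thesis
    using MD_inj by blast
qed

theorem theorem3p1:
  shows "(\<forall>D. oriented_descartes D \<longrightarrow>
            column 1 (MD D) \<noteq> 0 \<and> transpose (MD D) ** QD ** MD D = target3)
       \<and> (\<forall>M :: real ^ 3 ^ 4. column 1 M \<noteq> 0 \<and> transpose M ** QD ** M = target3 \<longrightarrow>
            (\<exists>!D. oriented_descartes D \<and> MD D = M))"
  using descartes_solution_MD ex1_oriented_descartes_if_solution
  unfolding descartes_solution_def by blast

end
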